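(* Consider the system \[ \begin{aligned} \frac{dS}{dt}&= B-\beta S(t)\int_{t_0}^{h_1} f_{T_1}(s)e^{-\mu_v s}G(I(t-s))\,ds-\mu S(t)+\alpha\int_{t_0}^{\infty} f_{T_3}(r)I(t-r)e^{-\mu r}\,dr,\\ \frac{dE}{dt}&= \beta S(t)\int_{t_0}^{h_1} f_{T_1}(s)e^{-\mu_v s}G(I(t-s))\,ds-\mu E(t)-\beta\int_{t_0}^{h_2} f_{T_2}(u)S(t-u)\int_{t_0}^{h_1} f_{T_1}(s)e^{-\mu_v s-\mu u}G(I(t-s-u))\,ds\,du,\\ \frac{dI}{dt}&= \beta\int_{t_0}^{h_2} f_{T_2}(u)S(t-u)\int_{t_0}^{h_1} f_{T_1}(s)e^{-\mu_v s-\mu u}G(I(t-s-u))\,ds\,du-(\mu+d+\alpha)I(t),\\ \frac{dR}{dt}&= \alpha I(t)-\mu R(t)-\alpha\int_{t_0}^{\infty} f_{T_3}(r)I(t-r)e^{-\mu r}\,dr, \end{aligned} \] with initial data $\varphi_k\in UC_g$, $\varphi_k(t_0)>0$, and let $(S,E,I,R)$ be a positive solution lying in $D^{expl}(\infty)=\{Y\in\mathbb{R}^4_+:\ \frac{B}{\mu+d}\le S+E+I+R\le\frac{B}{\mu}\}$. Let $R_0^*=\frac{\beta}{\mu+d+\alpha}$ and $E(e^{-(\mu_vT_1+\mu T_2)})=\int_{t_0}^{h_2}\int_{t_0}^{h_1}e^{-\mu_v s-\mu u}f_{T_2}(u)f_{T_1}(s)\,ds\,du$. Suppose one of the following holds: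 1. $R_0^*\ge1$ and $E(e^{-(\mu_vT_1+\mu T_2)})<\frac{1}{R_0^*}$; or 2. $R_0^*<1$. Then there is a positive constant $\lambda>0$ such that \[ \limsup_{t\to\infty}\frac{1}{t}\log I(t)<-\lambda , \] i.e. $I(t)$ converges to zero exponentially.
   Context: Constants: $t_0\ge0$, $h_1,h_2>0$, $B,\beta,\mu,\mu_v,\alpha>0$, $d\ge0$, with $B/\mu=1$. $T_1,T_2,T_3$ are random delays with probability densities $f_{T_1}$ on $[t_0,h_1]$, $f_{T_2}$ on $[t_0,h_2]$, $f_{T_3}$ on $[t_0,\infty)$. $G:[0,\infty)\to[0,\infty)$ satisfies: (A1) $G(0)=0$; (A2) strictly monotonic; (A3) $G\in C^2$, $G''<0$; (A4) $\lim_{I\to\infty}G(I)=C\in[0,\infty)$; (A5) $G(I)\le I$ for $I>0$; (A6) $\left(\frac{G(x)}{x}-\frac{G(y)}{y}\right)(G(x)-G(y))\le0$ for $x,y\ge0$. $UC_g$ is the space of continuous $\varphi:(-\infty,t_0]\to\mathbb{R}_+$ with $\sup_{t\le t_0}|\varphi(t)|/g(t)<\infty$ and $|\varphi|/g$ uniformly continuous, for a continuous non-increasing $g\ge1$ with $g(t_0)=1$, $\lim_{u\to t_0^-}g(t+u)/g(t)=1$ uniformly in $t\ge t_0$, $\lim_{t\to-\infty}g(t)=\infty$. *)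

theory Defs
  imports "HOL-Analysis.Analysis"
begin

definition density_on :: "real set \<Rightarrow> (real \<Rightarrow> real) \<Rightarrow> bool" where
  "density_on A f \<longleftrightarrow> f \<in> borel_measurable lborel \<and> (\<forall>x\<in>A. 0 \<le> f x)
     \<and> set_integrable lborel A f \<and> (LINT x:A|lborel. f x) = 1"

definition admissible_weight :: "real \<Rightarrow> (real \<Rightarrow> real) \<Rightarrow> bool" where
  "admissible_weight t0 g \<longleftrightarrow>
     continuous_on {..t0} g \<and> antimono_on {..t0} g \<and> (\<forall>t\<le>t0. 1 \<le> g t) \<and> g t0 = 1
     \<and> (\<forall>e>0. \<exists>\<delta>>0. \<forall>u. -\<delta> < u \<and> u \<le> 0 \<longrightarrow> (\<forall>t\<le>t0. \<bar>g (t + u) / g t - 1\<bar> < e))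
     \<and> (g \<longlongrightarrow> \<infinity>) at_bot"

definition UC_g :: "real \<Rightarrow> (real \<Rightarrow> real) \<Rightarrow> (real \<Rightarrow> real) set" where
  "UC_g t0 g = {\<phi>. continuous_on {..t0} \<phi> \<and> (\<forall>t\<le>t0. 0 \<le> \<phi> t)
     \<and> bdd_above ((\<lambda>t. \<bar>\<phi> t\<bar> / g t) ` {..t0})
     \<and> uniformly_continuous_on {..t0} (\<lambda>t. \<bar>\<phi> t\<bar> / g t)}"

definition incidence_fun :: "(real \<Rightarrow> real) \<Rightarrow> real \<Rightarrow> bool" where
  "incidence_fun G C \<longleftrightarrow>
     (\<forall>x\<ge>0. 0 \<le> G x)
     \<and> G 0 = 0
     \<and> strict_mono_on {0..} G
     \<and> (\<exists>G' G''. (\<forall>x\<ge>0. (G has_real_derivative G' x) (at x within {0..})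
                        \<and> (G' has_real_derivative G'' x) (at x within {0..})
                        \<and> G'' x < 0)
                 \<and> continuous_on {0..} G'')
     \<and> 0 \<le> C \<and> (G \<longlongrightarrow> C) at_top
     \<and> (\<forall>x>0. G x \<le> x)
     \<and> (\<forall>x>0. \<forall>y>0. (G x / x - G y / y) * (G x - G y) \<le> 0)"

definition R0_star :: "real \<Rightarrow> real \<Rightarrow> real \<Rightarrow> real \<Rightarrow> real" where
  "R0_star \<beta> \<mu> d \<alpha> = \<beta> / (\<mu> + d + \<alpha>)"

definition expect_decay ::
  "real \<Rightarrow> real \<Rightarrow> real \<Rightarrow> real \<Rightarrow> real \<Rightarrow> (real \<Rightarrow> real) \<Rightarrow> (real \<Rightarrow> real) \<Rightarrow> real" where
  "expect_decay t0 h1 h2 \<mu>v \<mu> f1 f2 =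
     (LINT u:{t0..h2}|lborel. (LINT s:{t0..h1}|lborel. exp (- \<mu>v * s - \<mu> * u) * f2 u * f1 s))"

end

(*
  Since S <= B / mu = 1 and G(x) <= x, the infection term of the I-equation is at most
  b = beta E(exp(-(mu_v T1 + mu T2))) times the maximum of I over the delay window [t - tau, t],
  tau = h1 + h2. So I satisfies the Halanay inequality I' <= b max_{[t - tau, t]} I - a I with
  a = mu + d + alpha, and either hypothesis gives b < a. Choose gamma > 0 with
  b exp(gamma tau) + gamma < a. Then I stays below the barrier M exp(-gamma t): at a first contact
  the delayed term is at most b exp(gamma tau) times the barrier, so I would be falling strictly
  faster than the barrier.
*)
theory Submission
  imports Defs
begin

text \<open>No integrability of \<open>f\<close> is needed: a non-integrable \<open>f\<close> has integral \<open>0\<close>.\<close>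
lemma set_integral_mono':
  fixes f g :: "'a \<Rightarrow> real"
  assumes "set_integrable M A g" "\<And>x. x \<in> A \<Longrightarrow> f x \<le> g x" "\<And>x. x \<in> A \<Longrightarrow> 0 \<le> g x"
  shows "(LINT x:A|M. f x) \<le> (LINT x:A|M. g x)"
  using assms unfolding set_lebesgue_integral_def set_integrable_def
  by (intro integral_mono') (auto simp: indicator_def)

lemma density_on_weighted_integral:
  assumes f: "density_on A f" and A: "A \<in> sets lborel" and w: "w \<in> borel_measurable lborel"
    and w_bounds: "\<And>x. x \<in> A \<Longrightarrow> 0 \<le> w x \<and> w x \<le> 1"
  shows "set_integrable lborel A (\<lambda>x. f x * w x)"
    and "0 \<le> (LINT x:A|lborel. f x * w x)"
    and "(LINT x:A|lborel. f x * w x) \<le> 1"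
proof -
  have f_meas: "f \<in> borel_measurable lborel" and f_int: "set_integrable lborel A f"
    and f_nonneg: "\<And>x. x \<in> A \<Longrightarrow> 0 \<le> f x" and f_total: "(LINT x:A|lborel. f x) = 1"
    using f unfolding density_on_def by auto
  show fw_int: "set_integrable lborel A (\<lambda>x. f x * w x)"
  proof (rule set_integrable_bound[OF f_int])
    show "set_borel_measurable lborel A (\<lambda>x. f x * w x)"
      unfolding set_borel_measurable_def using f_meas w A by measurable
    show "AE x in lborel. x \<in> A \<longrightarrow> norm (f x * w x) \<le> norm (f x)"
      using w_bounds by (auto simp: abs_mult intro!: mult_left_le)
  qed
  have "(LINT x:A|lborel. (0::real)) \<le> (LINT x:A|lborel. f x * w x)"
    using fw_int f_nonneg w_bounds by (intro set_integral_mono') auto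
  then show "0 \<le> (LINT x:A|lborel. f x * w x)" by simp
  have "(LINT x:A|lborel. f x * w x) \<le> (LINT x:A|lborel. f x)"
    using f_int f_nonneg w_bounds by (intro set_integral_mono') (auto intro: mult_left_le)
  then show "(LINT x:A|lborel. f x * w x) \<le> 1" using f_total by simp
qed

lemma expect_decay_eq_mult:
  "expect_decay t0 h1 h2 \<mu>v \<mu> f1 f2
     = (LINT u:{t0..h2}|lborel. f2 u * exp (- \<mu> * u)) * (LINT s:{t0..h1}|lborel. f1 s * exp (- \<mu>v * s))"
proof -
  have "(\<lambda>s. exp (- \<mu>v * s - \<mu> * u) * f2 u * f1 s)
      = (\<lambda>s. (f2 u * exp (- \<mu> * u)) * (f1 s * exp (- \<mu>v * s)))" for u
    by (simp add: exp_diff exp_minus field_simps)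
  then show ?thesis
    unfolding expect_decay_def set_integral_mult_right set_integral_mult_left by simp
qed

lemma density_on_laplace:
  assumes "density_on {t0..h} f" "0 \<le> t0" "0 \<le> \<mu>"
  shows "set_integrable lborel {t0..h} (\<lambda>s. f s * exp (- \<mu> * s))"
    and "0 \<le> (LINT s:{t0..h}|lborel. f s * exp (- \<mu> * s))"
    and "(LINT s:{t0..h}|lborel. f s * exp (- \<mu> * s)) \<le> 1"
  using density_on_weighted_integral[OF assms(1), of "\<lambda>s. exp (- \<mu> * s)"] assms(2,3)
  by auto

lemma expect_decay_le_one:
  assumes "density_on {t0..h1} f1" "density_on {t0..h2} f2" "0 \<le> t0" "0 \<le> \<mu>v" "0 \<le> \<mu>"
  shows "expect_decay t0 h1 h2 \<mu>v \<mu> f1 f2 \<le> 1"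
  using density_on_laplace[OF assms(1,3,4)] density_on_laplace[OF assms(2,3,5)]
  by (auto simp: expect_decay_eq_mult intro: mult_le_one)

lemma R0_star_condition_imp_less:
  assumes \<beta>: "0 < \<beta>" and c: "0 < \<mu> + d + \<alpha>" and "K \<le> 1"
    and "(R0_star \<beta> \<mu> d \<alpha> \<ge> 1 \<and> K < 1 / R0_star \<beta> \<mu> d \<alpha>) \<or> R0_star \<beta> \<mu> d \<alpha> < 1"
  shows "\<beta> * K < \<mu> + d + \<alpha>"
  using assms(4)
proof
  assume "R0_star \<beta> \<mu> d \<alpha> \<ge> 1 \<and> K < 1 / R0_star \<beta> \<mu> d \<alpha>"
  then have "K < (\<mu> + d + \<alpha>) / \<beta>" unfolding R0_star_def by simp
  then show ?thesis using \<beta> by (simp add: field_simps)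
next
  assume "R0_star \<beta> \<mu> d \<alpha> < 1"
  then have "\<beta> < \<mu> + d + \<alpha>" using c unfolding R0_star_def by simp
  moreover have "\<beta> * K \<le> \<beta>" using \<beta> \<open>K \<le> 1\<close> by (simp add: mult_left_le)
  ultimately show ?thesis by linarith
qed

lemma delayed_incidence_inner_le:
  fixes Z :: "real \<Rightarrow> real"
  assumes dens: "density_on {t0..h1} f1" and rates: "0 \<le> t0" "0 \<le> \<mu>v"
    and Z_le: "\<And>s. s \<in> {t0..h1} \<Longrightarrow> Z (t - s - u) \<le> P" and P: "0 \<le> P"
  shows "(LINT s:{t0..h1}|lborel. f1 s * exp (- \<mu>v * s - \<mu> * u) * Z (t - s - u))
         \<le> exp (- \<mu> * u) * P * (LINT s:{t0..h1}|lborel. f1 s * exp (- \<mu>v * s))"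
proof -
  have "(LINT s:{t0..h1}|lborel. f1 s * exp (- \<mu>v * s - \<mu> * u) * Z (t - s - u))
      \<le> (LINT s:{t0..h1}|lborel. (exp (- \<mu> * u) * P) * (f1 s * exp (- \<mu>v * s)))"
  proof (rule set_integral_mono')
    fix s assume s: "s \<in> {t0..h1}"
    then have f1_nonneg: "0 \<le> f1 s" using dens unfolding density_on_def by blast
    then have "f1 s * exp (- \<mu>v * s - \<mu> * u) * Z (t - s - u) \<le> f1 s * exp (- \<mu>v * s - \<mu> * u) * P"
      using Z_le[OF s] by (intro mult_left_mono) auto
    also have "\<dots> = (exp (- \<mu> * u) * P) * (f1 s * exp (- \<mu>v * s))"
      by (simp add: exp_diff exp_minus field_simps)
    finally show "f1 s * exp (- \<mu>v * s - \<mu> * u) * Z (t - s - u)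
        \<le> (exp (- \<mu> * u) * P) * (f1 s * exp (- \<mu>v * s))" .
    show "0 \<le> (exp (- \<mu> * u) * P) * (f1 s * exp (- \<mu>v * s))"
      using f1_nonneg P by simp
  qed (use density_on_laplace[OF dens rates] in auto)
  then show ?thesis by simp
qed

lemma delayed_incidence_le:
  fixes S Z :: "real \<Rightarrow> real"
  assumes dens1: "density_on {t0..h1} f1" and dens2: "density_on {t0..h2} f2"
    and rates: "0 \<le> t0" "0 \<le> \<mu>v" "0 \<le> \<mu>"
    and S_bounds: "\<And>u. u \<in> {t0..h2} \<Longrightarrow> 0 \<le> S (t - u) \<and> S (t - u) \<le> 1"
    and Z_le: "\<And>u s. u \<in> {t0..h2} \<Longrightarrow> s \<in> {t0..h1} \<Longrightarrow> Z (t - s - u) \<le> P"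
    and P: "0 \<le> P"
  shows "(LINT u:{t0..h2}|lborel. f2 u * S (t - u) *
            (LINT s:{t0..h1}|lborel. f1 s * exp (- \<mu>v * s - \<mu> * u) * Z (t - s - u)))
         \<le> expect_decay t0 h1 h2 \<mu>v \<mu> f1 f2 * P"
proof -
  define Q where "Q = (LINT s:{t0..h1}|lborel. f1 s * exp (- \<mu>v * s))"
  have "0 \<le> Q" using density_on_laplace[OF dens1 rates(1,2)] unfolding Q_def by blast
  have "(LINT u:{t0..h2}|lborel. f2 u * S (t - u) *
            (LINT s:{t0..h1}|lborel. f1 s * exp (- \<mu>v * s - \<mu> * u) * Z (t - s - u)))
      \<le> (LINT u:{t0..h2}|lborel. (f2 u * exp (- \<mu> * u)) * (P * Q))"
  proof (rule set_integral_mono')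
    fix u assume u: "u \<in> {t0..h2}"
    then have f2_nonneg: "0 \<le> f2 u" using dens2 unfolding density_on_def by blast
    define J where "J = (LINT s:{t0..h1}|lborel. f1 s * exp (- \<mu>v * s - \<mu> * u) * Z (t - s - u))"
    have "J \<le> exp (- \<mu> * u) * P * Q"
      unfolding J_def Q_def using Z_le[OF u] by (intro delayed_incidence_inner_le dens1 rates P)
    moreover have "0 \<le> exp (- \<mu> * u) * P * Q" using P \<open>0 \<le> Q\<close> by simp
    moreover have "S (t - u) * J \<le> max J 0"
      using S_bounds[OF u] by (cases "J \<le> 0") (auto simp: mult_nonneg_nonpos mult_left_le_one_le)
    ultimately have "S (t - u) * J \<le> exp (- \<mu> * u) * P * Q" by linarith
    then have "f2 u * (S (t - u) * J) \<le> f2 u * (exp (- \<mu> * u) * P * Q)"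
      using f2_nonneg by (rule mult_left_mono)
    then show "f2 u * S (t - u) * J \<le> (f2 u * exp (- \<mu> * u)) * (P * Q)"
      by (simp add: algebra_simps)
    show "0 \<le> (f2 u * exp (- \<mu> * u)) * (P * Q)"
      using f2_nonneg P \<open>0 \<le> Q\<close> by simp
  qed (use density_on_laplace[OF dens2 rates(1,3)] in auto)
  also have "\<dots> = expect_decay t0 h1 h2 \<mu>v \<mu> f1 f2 * P"
    unfolding expect_decay_eq_mult Q_def by simp
  finally show ?thesis .
qed

lemma delayed_incidence_le_window_max:
  fixes S I G :: "real \<Rightarrow> real"
  assumes dens1: "density_on {t0..h1} f1" and dens2: "density_on {t0..h2} f2"
    and rates: "0 \<le> t0" "0 \<le> h1" "0 \<le> \<mu>v" "0 \<le> \<mu>"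
    and S_bounds: "\<And>y. t0 \<le> y \<Longrightarrow> 0 \<le> S y \<and> S y \<le> 1"
    and I_pos: "\<And>y. t0 \<le> y \<Longrightarrow> 0 < I y" and G_le: "\<And>y. 0 < y \<Longrightarrow> G y \<le> y"
    and t: "t0 + (h1 + h2) \<le> t" and window: "\<And>y. t - (h1 + h2) \<le> y \<Longrightarrow> y \<le> t \<Longrightarrow> I y \<le> P"
    and P: "0 \<le> P"
  shows "(LINT u:{t0..h2}|lborel. f2 u * S (t - u) *
            (LINT s:{t0..h1}|lborel. f1 s * exp (- \<mu>v * s - \<mu> * u) * G (I (t - s - u))))
         \<le> expect_decay t0 h1 h2 \<mu>v \<mu> f1 f2 * P"
proof (rule delayed_incidence_le[OF dens1 dens2 rates(1,3,4) _ _ P, where Z = "\<lambda>y. G (I y)"])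
  fix u assume "u \<in> {t0..h2}"
  then show "0 \<le> S (t - u) \<and> S (t - u) \<le> 1" using t rates by (intro S_bounds) auto
next
  fix u s assume "u \<in> {t0..h2}" "s \<in> {t0..h1}"
  then have "t0 \<le> t - s - u" "t - (h1 + h2) \<le> t - s - u" "t - s - u \<le> t"
    using t rates by auto
  then show "G (I (t - s - u)) \<le> P"
    using I_pos G_le[of "I (t - s - u)"] window[of "t - s - u"] by fastforce
qed

lemma halanay_rate_exists:
  fixes a b \<tau> :: real
  assumes "b < a"
  obtains \<gamma> where "0 < \<gamma>" "b * exp (\<gamma> * \<tau>) + \<gamma> < a"
proof -
  have "((\<lambda>\<gamma>. b * exp (\<gamma> * \<tau>) + \<gamma>) \<longlongrightarrow> b * exp (0 * \<tau>) + 0) (at_right 0)"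
    by (intro tendsto_intros)
  then have "eventually (\<lambda>\<gamma>. b * exp (\<gamma> * \<tau>) + \<gamma> < a) (at_right 0)"
    using assms by (intro order_tendstoD(2)) auto
  moreover have "eventually (\<lambda>\<gamma>. 0 < \<gamma>) (at_right (0::real))"
    by (simp add: eventually_at_right_less)
  ultimately have "\<exists>\<gamma>. b * exp (\<gamma> * \<tau>) + \<gamma> < a \<and> 0 < \<gamma>"
    by (intro eventually_happens'[OF _ eventually_conj]) simp_all
  then show ?thesis using that by blast
qed

lemma first_crossing:
  fixes x w :: "real \<Rightarrow> real"
  assumes x: "continuous_on {T..} x" and w: "continuous_on {T..} w"
    and below: "x T < w T" and crossed: "T \<le> t" "w t \<le> x t"
  obtains s where "T < s" "x s = w s" "\<And>y. T \<le> y \<Longrightarrow> y < s \<Longrightarrow> x y < w y"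
proof -
  have x': "continuous_on {T..t} x" and w': "continuous_on {T..t} w"
    using x w by (auto elim: continuous_on_subset)
  define A where "A = {y \<in> {T..t}. w y \<le> x y}"
  have "closed A" unfolding A_def by (intro continuous_on_closed_Collect_le x' w') simp
  moreover have "t \<in> A" using crossed unfolding A_def by simp
  moreover have "bdd_below A" unfolding A_def by (auto intro: bdd_belowI)
  ultimately have sA: "Inf A \<in> A" by (intro closed_contains_Inf) auto
  define s where "s = Inf A"
  have before: "x y < w y" if "T \<le> y" "y < s" for y
  proof (rule ccontr)
    assume "\<not> x y < w y"
    then have "y \<in> A" using that sA unfolding A_def s_def by auto
    then have "s \<le> y" unfolding s_def using \<open>bdd_below A\<close> by (rule cInf_lower)
    with that show False by simp
  qed
  have "T \<le> s" "w s \<le> x s" using sA unfolding A_def s_def by auto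
  with below have "T < s" by (cases "T = s") auto
  have "{T..<s} \<subseteq> {y \<in> {T..t}. x y \<le> w y}"
    using before sA unfolding A_def s_def by (auto simp: less_imp_le)
  then have "closure {T..<s} \<subseteq> {y \<in> {T..t}. x y \<le> w y}"
    by (intro closure_minimal continuous_on_closed_Collect_le x' w') simp_all
  moreover have "s \<in> closure {T..<s}" using \<open>T < s\<close> by simp
  ultimately have "x s \<le> w s" by blast
  with \<open>w s \<le> x s\<close> have "x s = w s" by simp
  with \<open>T < s\<close> before show ?thesis using that by blast
qed

lemma halanay_comparison:
  fixes x x' :: "real \<Rightarrow> real"
  assumes deriv: "\<And>t. t0 \<le> t \<Longrightarrow> (x has_real_derivative x' t) (at t within {t0..})"
    and delay: "\<And>t P. t0 + \<tau> \<le> t \<Longrightarrow> (\<And>y. t - \<tau> \<le> y \<Longrightarrow> y \<le> t \<Longrightarrow> x y \<le> P) \<Longrightarrow> 0 \<le> P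
                  \<Longrightarrow> x' t \<le> b * P - a * x t"
    and \<tau>: "0 \<le> \<tau>" and \<gamma>: "0 \<le> \<gamma>" "b * exp (\<gamma> * \<tau>) + \<gamma> < a"
    and M: "0 < M" and init: "\<And>t. t0 \<le> t \<Longrightarrow> t \<le> t0 + \<tau> \<Longrightarrow> x t < M"
    and t: "t0 + \<tau> \<le> t"
  shows "x t < M * exp (- \<gamma> * (t - (t0 + \<tau>)))"
proof (rule ccontr)
  define T where "T = t0 + \<tau>"
  define w where "w y = M * exp (- \<gamma> * (y - T))" for y
  have w_pos: "0 < w y" for y using M unfolding w_def by simp
  have w_antimono: "w z \<le> w y" if "y \<le> z" for y z
    using that \<gamma> M unfolding w_def by (auto intro!: mult_left_mono)
  have w_shift: "w (y - \<tau>) = w y * exp (\<gamma> * \<tau>)" for y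
    unfolding w_def by (simp add: algebra_simps flip: exp_add)
  have w_deriv: "(w has_real_derivative - \<gamma> * w y) (at y)" for y
    unfolding w_def by (auto intro!: derivative_eq_intros)
  have w_cont: "continuous_on {T..} w" unfolding w_def by (intro continuous_intros)
  have "continuous_on {t0..} x" by (rule DERIV_continuous_on[OF deriv]) simp
  then have x_cont: "continuous_on {T..} x"
    by (rule continuous_on_subset) (use \<tau> in \<open>auto simp: T_def\<close>)
  assume "\<not> x t < M * exp (- \<gamma> * (t - (t0 + \<tau>)))"
  then have "w t \<le> x t" unfolding w_def T_def by simp
  moreover have "x T < w T" using init[of T] \<tau> unfolding w_def T_def by simp
  ultimately obtain s where s: "T < s" "x s = w s" and before: "\<And>y. T \<le> y \<Longrightarrow> y < s \<Longrightarrow> x y < w y"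
    using first_crossing[OF x_cont w_cont _ t[folded T_def]] by blast
  have window: "x y \<le> w s * exp (\<gamma> * \<tau>)" if "s - \<tau> \<le> y" "y \<le> s" for y
  proof -
    have "w y \<le> w s * exp (\<gamma> * \<tau>)" using w_antimono[OF that(1)] w_shift by simp
    moreover have "x y < w (s - \<tau>)" if "y < T"
      using init[of y] w_antimono[of "s - \<tau>" T] \<open>s - \<tau> \<le> y\<close> s(1) that
      unfolding w_def T_def by auto
    ultimately show ?thesis using before[of y] s \<open>y \<le> s\<close> w_shift
      by (cases "y < T"; cases "y = s") auto
  qed
  have "(x has_real_derivative x' s) (at s within {t0<..})"
    by (rule has_field_derivative_subset[OF deriv]) (use s(1) \<tau> in \<open>auto simp: T_def\<close>)
  then have x_deriv: "(x has_real_derivative x' s) (at s)"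
    using at_within_open[of s "{t0<..}"] s(1) \<tau> by (simp add: T_def)
  have "x' s \<le> b * (w s * exp (\<gamma> * \<tau>)) - a * x s"
    using s(1) window w_pos[of s] unfolding T_def by (intro delay) (auto intro: less_imp_le)
  also have "\<dots> < - \<gamma> * w s"
  proof -
    have "(b * exp (\<gamma> * \<tau>) + \<gamma>) * w s < a * w s"
      using \<gamma>(2) w_pos[of s] by (rule mult_strict_right_mono)
    then show ?thesis using s(2) by (simp add: algebra_simps)
  qed
  finally obtain \<delta> where "0 < \<delta>" and dec: "\<And>h. 0 < h \<Longrightarrow> h < \<delta> \<Longrightarrow> x s - w s < x (s - h) - w (s - h)"
    using DERIV_neg_dec_left[OF DERIV_diff[OF x_deriv w_deriv]] by force
  define h where "h = min (\<delta> / 2) (s - T)"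
  have "0 < h" "h < \<delta>" "T \<le> s - h" using \<open>0 < \<delta>\<close> s(1) unfolding h_def by auto
  then show False using dec[of h] before[of "s - h"] s(2) by simp
qed

lemma halanay_exponential_decay:
  fixes x x' :: "real \<Rightarrow> real"
  assumes deriv: "\<And>t. t0 \<le> t \<Longrightarrow> (x has_real_derivative x' t) (at t within {t0..})"
    and delay: "\<And>t P. t0 + \<tau> \<le> t \<Longrightarrow> (\<And>y. t - \<tau> \<le> y \<Longrightarrow> y \<le> t \<Longrightarrow> x y \<le> P) \<Longrightarrow> 0 \<le> P
                  \<Longrightarrow> x' t \<le> b * P - a * x t"
    and \<tau>: "0 \<le> \<tau>" and rate: "b < a"
  obtains \<gamma> M where "0 < \<gamma>" "\<And>t. t0 + \<tau> \<le> t \<Longrightarrow> x t \<le> M * exp (- \<gamma> * t)"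
proof -
  obtain \<gamma> where \<gamma>: "0 < \<gamma>" "b * exp (\<gamma> * \<tau>) + \<gamma> < a"
    using halanay_rate_exists[OF rate] by blast
  have "continuous_on {t0..} x" by (rule DERIV_continuous_on[OF deriv]) simp
  then have "continuous_on {t0..t0 + \<tau>} x" by (rule continuous_on_subset) auto
  then obtain y where "\<And>t. t \<in> {t0..t0 + \<tau>} \<Longrightarrow> x t \<le> x y"
    using continuous_attains_sup[OF compact_Icc] \<tau> by (metis atLeastatMost_empty_iff2 le_add_same_cancel1)
  then have init: "x t < max (x y) 0 + 1" if "t0 \<le> t" "t \<le> t0 + \<tau>" for t
    using that by fastforce
  define M where "M = max (x y) 0 + 1"
  have "x t \<le> M * exp (\<gamma> * (t0 + \<tau>)) * exp (- \<gamma> * t)" if t: "t0 + \<tau> \<le> t" for t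
  proof -
    have "x t < M * exp (- \<gamma> * (t - (t0 + \<tau>)))"
      using halanay_comparison[OF deriv delay \<tau> _ \<gamma>(2) _ init t] \<gamma>(1) unfolding M_def by force
    also have "\<dots> = M * exp (\<gamma> * (t0 + \<tau>)) * exp (- \<gamma> * t)"
      by (simp add: algebra_simps flip: exp_add)
    finally show ?thesis by simp
  qed
  with \<gamma>(1) show ?thesis by (rule that)
qed

lemma Limsup_ln_div_le_of_exp_bound:
  fixes x :: "real \<Rightarrow> real"
  assumes pos: "\<And>t. T \<le> t \<Longrightarrow> 0 < x t" and bound: "\<And>t. T \<le> t \<Longrightarrow> x t \<le> M * exp (- \<gamma> * t)"
  shows "Limsup at_top (\<lambda>t. ereal (ln (x t) / t)) \<le> ereal (- \<gamma>)"
proof -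
  have "eventually (\<lambda>t. ereal (ln (x t) / t) \<le> ereal (ln M / t - \<gamma>)) at_top"
  proof (rule eventually_at_top_linorderI)
    fix t assume t: "max T 1 \<le> t"
    then have "0 < x t" "x t \<le> M * exp (- \<gamma> * t)" using pos bound by auto
    then have "0 < M" by (smt (verit) exp_gt_zero zero_less_mult_iff)
    have "ln (x t) \<le> ln (M * exp (- \<gamma> * t))" using \<open>0 < x t\<close> \<open>x t \<le> _\<close> by simp
    also have "\<dots> = ln M - \<gamma> * t" using \<open>0 < M\<close> by (simp add: ln_mult)
    finally have "ln (x t) / t \<le> (ln M - \<gamma> * t) / t" using t by (simp add: divide_right_mono)
    also have "\<dots> = ln M / t - \<gamma>" using t by (simp add: field_simps)
    finally show "ereal (ln (x t) / t) \<le> ereal (ln M / t - \<gamma>)" by simp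
  qed
  then have "Limsup at_top (\<lambda>t. ereal (ln (x t) / t)) \<le> Limsup at_top (\<lambda>t. ereal (ln M / t - \<gamma>))"
    by (rule Limsup_mono)
  also have "\<dots> = ereal (- \<gamma>)"
  proof (rule lim_imp_Limsup)
    have "((\<lambda>t. ln M / t) \<longlongrightarrow> 0) at_top"
      by (intro tendsto_divide_0[OF tendsto_const] filterlim_at_top_imp_at_infinity filterlim_ident)
    then show "((\<lambda>t. ereal (ln M / t - \<gamma>)) \<longlongrightarrow> ereal (- \<gamma>)) at_top"
      using tendsto_diff[OF _ tendsto_const, of _ 0 at_top \<gamma>] by (simp add: lim_ereal)
  qed simp
  finally show ?thesis .
qed

theorem theorem4:
  fixes t0 h1 h2 B \<beta> \<mu> \<mu>v \<alpha> d C :: real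
    and f1 f2 f3 G g :: "real \<Rightarrow> real"
    and S E I R :: "real \<Rightarrow> real"
  assumes params: "0 \<le> t0" "0 < h1" "0 < h2" "0 < B" "0 < \<beta>" "0 < \<mu>" "0 < \<mu>v" "0 < \<alpha>" "0 \<le> d"
    and B_mu: "B / \<mu> = 1"
    and delays: "t0 < h1" "t0 < h2"
    and dens1: "density_on {t0..h1} f1"
    and dens2: "density_on {t0..h2} f2"
    and dens3: "density_on {t0..} f3"
    and G: "incidence_fun G C"
    and g: "admissible_weight t0 g"
    and init: "S \<in> UC_g t0 g" "E \<in> UC_g t0 g" "I \<in> UC_g t0 g" "R \<in> UC_g t0 g"
    and init_pos: "S t0 > 0" "E t0 > 0" "I t0 > 0" "R t0 > 0"
    and dS: "\<And>t. t \<ge> t0 \<Longrightarrow> (S has_real_derivative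
        (B - \<beta> * S t * (LINT s:{t0..h1}|lborel. f1 s * exp (- \<mu>v * s) * G (I (t - s)))
           - \<mu> * S t + \<alpha> * (LINT r:{t0..}|lborel. f3 r * I (t - r) * exp (- \<mu> * r)))) (at t within {t0..})"
    and dE: "\<And>t. t \<ge> t0 \<Longrightarrow> (E has_real_derivative
        (\<beta> * S t * (LINT s:{t0..h1}|lborel. f1 s * exp (- \<mu>v * s) * G (I (t - s)))
           - \<mu> * E t
           - \<beta> * (LINT u:{t0..h2}|lborel. f2 u * S (t - u) *
                (LINT s:{t0..h1}|lborel. f1 s * exp (- \<mu>v * s - \<mu> * u) * G (I (t - s - u)))))) (at t within {t0..})"
    and dI: "\<And>t. t \<ge> t0 \<Longrightarrow> (I has_real_derivative
        (\<beta> * (LINT u:{t0..h2}|lborel. f2 u * S (t - u) *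
                (LINT s:{t0..h1}|lborel. f1 s * exp (- \<mu>v * s - \<mu> * u) * G (I (t - s - u))))
           - (\<mu> + d + \<alpha>) * I t)) (at t within {t0..})"
    and dR: "\<And>t. t \<ge> t0 \<Longrightarrow> (R has_real_derivative
        (\<alpha> * I t - \<mu> * R t - \<alpha> * (LINT r:{t0..}|lborel. f3 r * I (t - r) * exp (- \<mu> * r)))) (at t within {t0..})"
    and pos: "\<And>t. t \<ge> t0 \<Longrightarrow> S t > 0 \<and> E t > 0 \<and> I t > 0 \<and> R t > 0"
    and region: "\<And>t. t \<ge> t0 \<Longrightarrow> B / (\<mu> + d) \<le> S t + E t + I t + R t \<and> S t + E t + I t + R t \<le> B / \<mu>"
    and cond: "(R0_star \<beta> \<mu> d \<alpha> \<ge> 1 \<and> expect_decay t0 h1 h2 \<mu>v \<mu> f1 f2 < 1 / R0_star \<beta> \<mu> d \<alpha>)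
               \<or> R0_star \<beta> \<mu> d \<alpha> < 1"
  shows "\<exists>lam>0. Limsup at_top (\<lambda>t. ereal (ln (I t) / t)) < ereal (- lam)"
proof -
  define K where "K = expect_decay t0 h1 h2 \<mu>v \<mu> f1 f2"
  define L where "L t = (LINT u:{t0..h2}|lborel. f2 u * S (t - u) *
      (LINT s:{t0..h1}|lborel. f1 s * exp (- \<mu>v * s - \<mu> * u) * G (I (t - s - u))))" for t
  have "K \<le> 1"
    using expect_decay_le_one[OF dens1 dens2] params unfolding K_def by auto
  then have rate: "\<beta> * K < \<mu> + d + \<alpha>"
    using R0_star_condition_imp_less params cond unfolding K_def by auto
  have G_le: "G y \<le> y" if "0 < y" for y
    using G that unfolding incidence_fun_def by blast
  have S_bounds: "0 \<le> S t \<and> S t \<le> 1" if "t0 \<le> t" for t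
    using pos[OF that] region[OF that] B_mu by auto
  have dI': "(I has_real_derivative \<beta> * L t - (\<mu> + d + \<alpha>) * I t) (at t within {t0..})"
    if "t0 \<le> t" for t
    using dI[OF that] unfolding L_def .
  have delay: "\<beta> * L t - (\<mu> + d + \<alpha>) * I t \<le> \<beta> * K * P - (\<mu> + d + \<alpha>) * I t"
    if "t0 + (h1 + h2) \<le> t" "\<And>y. t - (h1 + h2) \<le> y \<Longrightarrow> y \<le> t \<Longrightarrow> I y \<le> P" "0 \<le> P" for t P
  proof -
    have "L t \<le> K * P"
      unfolding L_def K_def
      by (rule delayed_incidence_le_window_max[OF dens1 dens2]) (use that S_bounds pos G_le params in auto)
    then show ?thesis using params by simp
  qed
  obtain \<gamma> M where "0 < \<gamma>" and decay: "\<And>t. t0 + (h1 + h2) \<le> t \<Longrightarrow> I t \<le> M * exp (- \<gamma> * t)"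
    using halanay_exponential_decay[where \<tau> = "h1 + h2", OF dI' delay _ rate] params by auto
  have "Limsup at_top (\<lambda>t. ereal (ln (I t) / t)) \<le> ereal (- \<gamma>)"
    by (rule Limsup_ln_div_le_of_exp_bound[OF _ decay]) (use pos params in auto)
  also have "\<dots> < ereal (- (\<gamma> / 2))" using \<open>0 < \<gamma>\<close> by simp
  finally show ?thesis using \<open>0 < \<gamma>\<close> by (intro exI[of _ "\<gamma> / 2"]) simp
qed

end
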